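(* Let $d\ge1$, $\alpha\in(0,2)$, and let $D\subset\mathbb{R}^d$ be a Borel set. For every $\gamma\in[0,2\alpha)$ there exists a constant $C_1=C_1(d,\alpha,\gamma)>1$ such that for all $(t,y,z)\in(0,\infty)\times D\times D$, $$\Big(1\wedge\frac{\delta_D(z)}{t^{1/\alpha}}\Big)^\gamma\int_0^{t/2}\psi_\gamma(s,z,y)q(s,z,y)\,ds\le C_1\Big(1\wedge\frac{\delta_D(y)}{t^{1/\alpha}}\Big)^\gamma\int_0^{t/2}\Big(1\wedge\frac{\delta_D(z)}{s^{1/\alpha}}\Big)^\gamma q(s,z,y)\,ds.$$
   Context: $\delta_D(x)$ is the Euclidean distance from $x$ to $D^c$; $q(t,x,y):=t^{-d/\alpha}\wedge\frac{t}{|x-y|^{d+\alpha}}$; $\psi_\gamma(t,x,y):=\big(1\wedge\frac{\delta_D(x)}{t^{1/\alpha}}\big)^\gamma\big(1\wedge\frac{\delta_D(y)}{t^{1/\alpha}}\big)^\gamma$. *)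

theory Defs
  imports "HOL-Analysis.Analysis"
begin

(* delta_D(x): Euclidean distance from x to the complement of D.
   If the complement is empty, the distance is +infinity, so the ratio
   min 1 (delta_D(x)/t^(1/alpha)) equals 1. *)
definition bdry_ratio :: "real \<Rightarrow> 'a::euclidean_space set \<Rightarrow> real \<Rightarrow> 'a \<Rightarrow> real" where
  "bdry_ratio \<alpha> D t x =
     (if - D = {} then 1 else min 1 (infdist x (- D) / t powr (1 / \<alpha>)))"

(* q(t,x,y) = t^{-d/alpha} \<wedge> t/|x-y|^{d+alpha}, with d = DIM('a);
   for x = y the second term is +infinity. *)
definition qker :: "real \<Rightarrow> real \<Rightarrow> 'a::euclidean_space \<Rightarrow> 'a \<Rightarrow> real" where
  "qker \<alpha> t x y =
     (if x = y then t powr (- real DIM('a) / \<alpha>)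
      else min (t powr (- real DIM('a) / \<alpha>)) (t / norm (x - y) powr (real DIM('a) + \<alpha>)))"

(* real power with the convention 0^0 = 1 (Isabelle's powr has 0 powr 0 = 0) *)
definition rpow :: "real \<Rightarrow> real \<Rightarrow> real" where
  "rpow x \<gamma> = (if \<gamma> = 0 then 1 else x powr \<gamma>)"

definition psi :: "real \<Rightarrow> real \<Rightarrow> 'a::euclidean_space set \<Rightarrow> real \<Rightarrow> 'a \<Rightarrow> 'a \<Rightarrow> real" where
  "psi \<alpha> \<gamma> D t x y = rpow (bdry_ratio \<alpha> D t x) \<gamma> * rpow (bdry_ratio \<alpha> D t y) \<gamma>"

end

theory Submission
  imports Defs
begin

text \<open>
  Write \<open>a = \<delta>\<^sub>D(z)\<close>, \<open>b = \<delta>\<^sub>D(y)\<close>. If \<open>a \<le> 2b\<close>, the boundary factor at \<open>z\<close> is at most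
  \<open>2\<^sup>\<gamma>\<close> times the one at \<open>y\<close>, and the factor of \<open>\<psi>\<^sub>\<gamma>\<close> at \<open>y\<close> is at most 1.
  Otherwise \<open>|z - y| > a/2\<close>. The boundary factor at \<open>y\<close> grows at most like \<open>(t/s)\<^bsup>\<gamma>/\<alpha>\<^esup>\<close>
  as \<open>s\<close> decreases from \<open>t\<close>, and this loss is paid for by the factor at \<open>z\<close> at time \<open>t\<close>
  except on \<open>(0, m)\<close>, \<open>m = min (t/2) (a\<^sup>\<alpha>)\<close>, where it leaves an error of order
  \<open>\<integral>\<^sub>0\<^sup>m (m/s)\<^bsup>\<gamma>/\<alpha>\<^esup> s |z - y|\<^bsup>-d-\<alpha>\<^esup> ds\<close>. Since \<open>\<gamma>/\<alpha> < 2\<close> this is a constant times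
  \<open>m\<^sup>2 |z - y|\<^bsup>-d-\<alpha>\<^esup>\<close>, and the right-hand integral is at least that much already on \<open>(0, m)\<close>,
  where the boundary factor at \<open>z\<close> equals 1 and \<open>q(s,z,y) \<ge> s (2|z - y|)\<^bsup>-d-\<alpha>\<^esup>\<close>.
\<close>

lemma set_nn_integral_indicator_powr:
  fixes e k m :: real
  assumes "-1 < e" "0 < m" "0 \<le> k" "{0<..<m} \<subseteq> S"
  shows "(\<integral>\<^sup>+ s \<in> S. ennreal (indicator {0<..<m} s * (k * s powr e)) \<partial>lborel)
    = ennreal (k * (m powr (e + 1) / (e + 1)))"
proof -
  have "((\<lambda>s. k * s powr e) has_integral k * (m powr (e + 1) / (e + 1))) {0<..<m}"
    using has_integral_mult_right[OF has_integral_powr_from_0[of e m]] assms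
    by (simp add: has_integral_Icc_iff_Ioo)
  then have "(\<integral>\<^sup>+ s. ennreal (k * s powr e) * indicator {0<..<m} s \<partial>lborel)
      = ennreal (k * (m powr (e + 1) / (e + 1)))"
    using assms by (intro nn_integral_has_integral_lebesgue') auto
  moreover have "ennreal (indicator {0<..<m} s * (k * s powr e)) * indicator S s
      = ennreal (k * s powr e) * indicator {0<..<m} s" for s
    using assms by (auto split: split_indicator)
  ultimately show ?thesis
    by simp
qed

lemma set_nn_integral_le_absorb:
  fixes f g h :: "'a \<Rightarrow> real"
  assumes "(\<lambda>x. ennreal (f x) * indicator S x) \<in> borel_measurable M"
    and "(\<lambda>x. ennreal (g x) * indicator S x) \<in> borel_measurable M"
    and "(\<lambda>x. ennreal (h x) * indicator S x) \<in> borel_measurable M"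
    and "0 \<le> a" "0 \<le> c" "0 \<le> K"
    and "\<And>x. x \<in> S \<Longrightarrow> 0 \<le> g x" "\<And>x. x \<in> S \<Longrightarrow> 0 \<le> h x"
    and "\<And>x. x \<in> S \<Longrightarrow> a * f x \<le> c * (h x + g x)"
    and "(\<integral>\<^sup>+ x \<in> S. ennreal (g x) \<partial>M) \<le> ennreal K * (\<integral>\<^sup>+ x \<in> S. ennreal (h x) \<partial>M)"
  shows "ennreal a * (\<integral>\<^sup>+ x \<in> S. ennreal (f x) \<partial>M)
    \<le> ennreal ((1 + K) * c) * (\<integral>\<^sup>+ x \<in> S. ennreal (h x) \<partial>M)"
proof -
  let ?H = "\<integral>\<^sup>+ x \<in> S. ennreal (h x) \<partial>M"
  have "ennreal a * (\<integral>\<^sup>+ x \<in> S. ennreal (f x) \<partial>M) = (\<integral>\<^sup>+ x. ennreal a * (ennreal (f x) * indicator S x) \<partial>M)"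
    using assms(1) by (simp add: nn_integral_cmult)
  also have "\<dots> \<le> (\<integral>\<^sup>+ x. ennreal c * (ennreal (h x) * indicator S x + ennreal (g x) * indicator S x) \<partial>M)"
  proof (intro nn_integral_mono)
    fix x
    show "ennreal a * (ennreal (f x) * indicator S x)
        \<le> ennreal c * (ennreal (h x) * indicator S x + ennreal (g x) * indicator S x)"
    proof (cases "x \<in> S")
      case True
      have "ennreal (a * f x) \<le> ennreal (c * (h x + g x))"
        using assms(9)[OF True] by (rule ennreal_leI)
      moreover have "ennreal (a * f x) = ennreal a * ennreal (f x)"
        using assms(4) by (rule ennreal_mult')
      moreover have "ennreal (c * (h x + g x)) = ennreal c * (ennreal (h x) + ennreal (g x))"
        using assms(5) assms(7,8)[OF True] by (simp add: ennreal_mult' ennreal_plus)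
      ultimately show ?thesis
        using True by simp
    qed simp
  qed
  also have "\<dots> = ennreal c * (?H + (\<integral>\<^sup>+ x \<in> S. ennreal (g x) \<partial>M))"
    using assms(2,3) by (simp add: nn_integral_cmult nn_integral_add)
  also have "\<dots> \<le> ennreal c * (?H + ennreal K * ?H)"
    using assms(10) by (intro mult_left_mono add_left_mono) auto
  also have "\<dots> = (1 + ennreal K) * ennreal c * ?H"
    by (simp add: algebra_simps)
  also have "(1 + ennreal K) * ennreal c = ennreal ((1 + K) * c)"
    using assms(6) by (simp add: ennreal_mult' ennreal_plus)
  finally show ?thesis .
qed

definition cutoff_ratio :: "real \<Rightarrow> real \<Rightarrow> real \<Rightarrow> real" where
  "cutoff_ratio \<alpha> \<delta> s = min 1 (\<delta> / s powr (1 / \<alpha>))"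

lemma cutoff_ratio_nonneg: "0 \<le> \<delta> \<Longrightarrow> 0 \<le> cutoff_ratio \<alpha> \<delta> s"
  by (simp add: cutoff_ratio_def)

lemma cutoff_ratio_powr_le_one: "0 \<le> \<delta> \<Longrightarrow> 0 \<le> \<gamma> \<Longrightarrow> cutoff_ratio \<alpha> \<delta> s powr \<gamma> \<le> 1"
  by (intro powr_le1) (auto simp: cutoff_ratio_def)

lemma cutoff_ratio_le_mult:
  assumes "0 \<le> \<delta>'" "1 \<le> c" "\<delta> \<le> c * \<delta>'"
  shows "cutoff_ratio \<alpha> \<delta> s \<le> c * cutoff_ratio \<alpha> \<delta>' s"
proof -
  have "\<delta> / s powr (1 / \<alpha>) \<le> c * (\<delta>' / s powr (1 / \<alpha>))"
    using assms by (simp add: divide_right_mono)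
  then show ?thesis
    using assms by (auto simp: cutoff_ratio_def min_def)
qed

text \<open>All scaling properties of the cutoff in \<open>s\<close> are read off this representation.\<close>

lemma cutoff_ratio_eq_powr:
  assumes "0 < \<alpha>" "0 \<le> \<delta>" "0 < s"
  shows "cutoff_ratio \<alpha> \<delta> s = (min s (\<delta> powr \<alpha>) / s) powr (1 / \<alpha>)"
proof (cases "s \<le> \<delta> powr \<alpha>")
  case True
  then have "s powr (1 / \<alpha>) \<le> (\<delta> powr \<alpha>) powr (1 / \<alpha>)"
    using assms by (intro powr_mono2) auto
  then have "s powr (1 / \<alpha>) \<le> \<delta>"
    using assms by (simp add: powr_powr)
  then show ?thesis
    using True assms by (simp add: cutoff_ratio_def)
next
  case False
  then have "\<delta> < s powr (1 / \<alpha>)"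
    using assms powr_less_mono2[of "1 / \<alpha>" "\<delta> powr \<alpha>" s]
    by (cases "\<delta> = 0") (auto simp: powr_powr)
  then show ?thesis
    using False assms by (simp add: cutoff_ratio_def powr_divide powr_powr)
qed

lemma cutoff_ratio_eq_one:
  assumes "0 < \<alpha>" "0 \<le> \<delta>" "0 < s" "s \<le> \<delta> powr \<alpha>"
  shows "cutoff_ratio \<alpha> \<delta> s = 1"
  using assms by (simp add: cutoff_ratio_eq_powr)

lemma cutoff_ratio_powr_product_le:
  assumes "0 < \<alpha>" "0 \<le> \<gamma>" "0 \<le> a" "0 \<le> b" "0 < s" "s \<le> t"
  shows "cutoff_ratio \<alpha> a t powr \<gamma> * cutoff_ratio \<alpha> b s powr \<gamma>
    \<le> cutoff_ratio \<alpha> b t powr \<gamma> * (min t (a powr \<alpha>) / s) powr (\<gamma> / \<alpha>)"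
proof -
  define p where "p = \<gamma> / \<alpha>"
  have cutoff_powr: "cutoff_ratio \<alpha> \<delta> r powr \<gamma> = (min r (\<delta> powr \<alpha>) / r) powr p"
    if "0 \<le> \<delta>" "0 < r" for \<delta> r
    using that assms by (simp add: cutoff_ratio_eq_powr powr_powr p_def)
  have "cutoff_ratio \<alpha> a t powr \<gamma> * cutoff_ratio \<alpha> b s powr \<gamma>
      = (min t (a powr \<alpha>) / t) powr p * (min s (b powr \<alpha>) / s) powr p"
    using assms by (simp add: cutoff_powr)
  also have "\<dots> \<le> (min t (a powr \<alpha>) / t) powr p * (min t (b powr \<alpha>) / s) powr p"
    using assms by (intro mult_left_mono powr_mono2 divide_right_mono) (auto simp: p_def)
  also have "\<dots> = (min t (b powr \<alpha>) / t) powr p * (min t (a powr \<alpha>) / s) powr p"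
    by (simp add: powr_mult[symmetric] field_simps)
  finally show ?thesis
    using assms by (simp add: cutoff_powr p_def)
qed

lemma qker_nonneg: "0 \<le> s \<Longrightarrow> 0 \<le> qker \<alpha> s x y"
  by (simp add: qker_def)

lemma qker_le_off_diagonal:
  fixes x y :: "'a::euclidean_space"
  shows "x \<noteq> y \<Longrightarrow> qker \<alpha> s x y \<le> s / dist x y powr (real DIM('a) + \<alpha>)"
  by (simp add: qker_def dist_norm)

lemma qker_ge_off_diagonal:
  fixes x y :: "'a::euclidean_space"
  assumes "0 < \<alpha>" "x \<noteq> y" "dist x y \<le> \<rho>" "0 < s" "s \<le> \<rho> powr \<alpha>"
  shows "s / \<rho> powr (real DIM('a) + \<alpha>) \<le> qker \<alpha> s x y"
proof -
  define d where "d = real DIM('a)"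
  have \<rho>: "0 < \<rho>"
    using assms(2,3) zero_less_dist_iff[of x y] by linarith
  have "(s powr (1 / \<alpha>)) powr (d + \<alpha>) \<le> ((\<rho> powr \<alpha>) powr (1 / \<alpha>)) powr (d + \<alpha>)"
    using assms by (intro powr_mono2) (auto simp: d_def)
  moreover have "(s powr (1 / \<alpha>)) powr (d + \<alpha>) = s * s powr (d / \<alpha>)"
    using assms by (simp add: powr_powr add_divide_distrib powr_add)
  ultimately have "s * s powr (d / \<alpha>) \<le> \<rho> powr (d + \<alpha>)"
    using assms \<rho> by (simp add: powr_powr)
  then have "s / \<rho> powr (d + \<alpha>) \<le> s / (s * s powr (d / \<alpha>))"
    using assms \<rho> by (intro divide_left_mono) auto
  also have "\<dots> = s powr (- d / \<alpha>)"
    using assms by (simp add: powr_minus divide_simps)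
  finally have "s / \<rho> powr (d + \<alpha>) \<le> s powr (- d / \<alpha>)" .
  moreover have "s / \<rho> powr (d + \<alpha>) \<le> s / norm (x - y) powr (d + \<alpha>)"
    using assms \<rho> by (intro divide_left_mono powr_mono2) (auto simp: d_def dist_norm)
  ultimately show ?thesis
    using assms by (simp add: qker_def d_def)
qed

lemma cutoff_ratio_powr_product_le_cases:
  assumes "0 < \<alpha>" "0 < \<gamma>" "0 \<le> a" "0 \<le> b" "0 < s" "s < t/2"
  defines "m \<equiv> min (t/2) (a powr \<alpha>)"
  shows "cutoff_ratio \<alpha> a t powr \<gamma> * cutoff_ratio \<alpha> b s powr \<gamma>
    \<le> cutoff_ratio \<alpha> b t powr \<gamma> * (if s < m then (2 * m / s) powr (\<gamma> / \<alpha>) else 1)"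
proof -
  have "(min t (a powr \<alpha>) / s) powr (\<gamma> / \<alpha>) \<le> (if s < m then (2 * m / s) powr (\<gamma> / \<alpha>) else 1)"
  proof (cases "s < m")
    case True
    have "min t (a powr \<alpha>) \<le> 2 * m"
      using assms(5,6) by (auto simp: m_def min_def)
    then show ?thesis
      using True assms by (auto intro!: powr_mono2 divide_right_mono)
  next
    case False
    then have "min t (a powr \<alpha>) / s \<le> 1"
      using assms by (auto simp: m_def)
    then show ?thesis
      using False assms by (auto intro!: powr_le1)
  qed
  then have "cutoff_ratio \<alpha> b t powr \<gamma> * (min t (a powr \<alpha>) / s) powr (\<gamma> / \<alpha>)
      \<le> cutoff_ratio \<alpha> b t powr \<gamma> * (if s < m then (2 * m / s) powr (\<gamma> / \<alpha>) else 1)"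
    by (rule mult_left_mono) simp
  with cutoff_ratio_powr_product_le show ?thesis
    by (rule order_trans) (use assms in auto)
qed

lemma cutoff_kernel_product_le:
  fixes y z :: "'a::euclidean_space"
  assumes "0 < \<alpha>" "0 < \<gamma>" "0 \<le> a" "0 \<le> b" "z \<noteq> y" "0 < s" "s < t/2"
  defines "m \<equiv> min (t/2) (a powr \<alpha>)"
  shows "cutoff_ratio \<alpha> a t powr \<gamma> * (cutoff_ratio \<alpha> a s powr \<gamma> * cutoff_ratio \<alpha> b s powr \<gamma> * qker \<alpha> s z y)
    \<le> cutoff_ratio \<alpha> b t powr \<gamma> * (cutoff_ratio \<alpha> a s powr \<gamma> * qker \<alpha> s z y
      + indicator {0<..<m} s * ((2 * m) powr (\<gamma> / \<alpha>) / dist z y powr (real DIM('a) + \<alpha>) * s powr (1 - \<gamma> / \<alpha>)))"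
proof -
  define A where "A r = cutoff_ratio \<alpha> a r powr \<gamma>" for r
  define B where "B r = cutoff_ratio \<alpha> b r powr \<gamma>" for r
  define Q where "Q = qker \<alpha> s z y"
  define p where "p = \<gamma> / \<alpha>"
  define L where "L = dist z y powr (real DIM('a) + \<alpha>)"
  define g where "g = indicator {0<..<m} s * ((2 * m) powr p / L * s powr (1 - p))"
  have A: "0 \<le> A r" "A r \<le> 1" and B: "0 \<le> B r" "B r \<le> 1" for r
    using assms by (auto simp: A_def B_def cutoff_ratio_powr_le_one)
  have Q: "0 \<le> Q"
    using assms by (simp add: Q_def qker_nonneg)
  have "A s * Q \<le> Q"
    using A Q by (simp add: mult_left_le_one_le)
  also have "\<dots> \<le> s / L"
    using qker_le_off_diagonal[OF assms(5)] by (simp add: Q_def L_def)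
  finally have AQ: "A s * Q \<le> s / L" .
  have "A t * B s * (A s * Q) \<le> B t * (if s < m then (2 * m / s) powr p else 1) * (A s * Q)"
    using cutoff_ratio_powr_product_le_cases[of \<alpha> \<gamma> a b s t] assms A Q
    by (intro mult_right_mono) (auto simp: A_def B_def m_def p_def)
  also have "\<dots> \<le> B t * (A s * Q + g)"
  proof (cases "s < m")
    case True
    have "(2 * m / s) powr p * (A s * Q) \<le> (2 * m / s) powr p * (s / L)"
      using AQ by (intro mult_left_mono) auto
    also have "\<dots> = g"
      using True assms by (simp add: g_def powr_divide powr_diff)
    finally have "(2 * m / s) powr p * (A s * Q) \<le> A s * Q + g"
      using A Q by (simp add: add_increasing)
    then show ?thesis
      using True B[of t] by (simp add: mult.assoc mult_left_mono)
  qed (use B[of t] assms in \<open>auto simp: g_def intro!: mult_left_mono\<close>)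
  finally show ?thesis
    by (simp add: A_def B_def Q_def g_def p_def L_def mult_ac)
qed

lemma cutoff_kernel_integral_ge:
  fixes y z :: "'a::euclidean_space"
  assumes "0 < \<alpha>" "0 < a" "a \<le> 2 * dist z y" "0 < T"
  defines "m \<equiv> min T (a powr \<alpha>)"
  shows "ennreal (m\<^sup>2 / (2 * (2 * dist z y) powr (real DIM('a) + \<alpha>)))
    \<le> (\<integral>\<^sup>+ s \<in> {0<..<T}. ennreal (cutoff_ratio \<alpha> a s powr \<gamma> * qker \<alpha> s z y) \<partial>lborel)"
proof -
  define M where "M = (2 * dist z y) powr (real DIM('a) + \<alpha>)"
  have M: "0 < M" and zy: "z \<noteq> y"
    using assms by (auto simp: M_def)
  have "m > 0"
    using assms by (simp add: m_def)
  then have "ennreal (m\<^sup>2 / (2 * M)) = ennreal (1 / M * (m powr (1 + 1) / (1 + 1)))"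
    by (simp add: powr_numeral mult.commute)
  also have "\<dots> = (\<integral>\<^sup>+ s \<in> {0<..<T}. ennreal (indicator {0<..<m} s * (1 / M * s powr 1)) \<partial>lborel)"
    using \<open>m > 0\<close> M by (intro set_nn_integral_indicator_powr[symmetric]) (auto simp: m_def)
  also have "\<dots> \<le> (\<integral>\<^sup>+ s \<in> {0<..<T}. ennreal (cutoff_ratio \<alpha> a s powr \<gamma> * qker \<alpha> s z y) \<partial>lborel)"
  proof (intro nn_integral_mono)
    fix s :: real
    have "indicator {0<..<m} s * (1 / M * s powr 1) \<le> cutoff_ratio \<alpha> a s powr \<gamma> * qker \<alpha> s z y"
      if "0 < s"
    proof (cases "s < m")
      case True
      then have s: "s \<le> (2 * dist z y) powr \<alpha>"
        using assms powr_mono2[of \<alpha> a "2 * dist z y"] by (auto simp: m_def)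
      have "cutoff_ratio \<alpha> a s = 1"
        using True assms \<open>0 < s\<close> by (intro cutoff_ratio_eq_one) (auto simp: m_def)
      then show ?thesis
        using qker_ge_off_diagonal[OF assms(1) zy _ \<open>0 < s\<close> s] True \<open>0 < s\<close> by (simp add: M_def)
    next
      case False
      then show ?thesis
        using qker_nonneg[of s \<alpha> z y] \<open>0 < s\<close> by simp
    qed
    then show "ennreal (indicator {0<..<m} s * (1 / M * s powr 1)) * indicator {0<..<T} s
        \<le> ennreal (cutoff_ratio \<alpha> a s powr \<gamma> * qker \<alpha> s z y) * indicator {0<..<T} s"
      by (auto intro: ennreal_leI split: split_indicator)
  qed
  finally show ?thesis
    by (simp add: M_def)
qed

lemma cutoff_kernel_integral_le_far:
  fixes y z :: "'a::euclidean_space"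
  assumes "0 < \<alpha>" "0 < \<gamma>" "\<gamma> < 2 * \<alpha>" "0 < a" "0 \<le> b" "a \<le> 2 * dist z y" "0 < t"
  shows "ennreal (cutoff_ratio \<alpha> a t powr \<gamma>) *
      (\<integral>\<^sup>+ s \<in> {0<..<t/2}. ennreal (cutoff_ratio \<alpha> a s powr \<gamma> * cutoff_ratio \<alpha> b s powr \<gamma> * qker \<alpha> s z y) \<partial>lborel)
    \<le> ennreal ((1 + 2 powr (\<gamma> / \<alpha> + 1 + real DIM('a) + \<alpha>) / (2 - \<gamma> / \<alpha>)) * cutoff_ratio \<alpha> b t powr \<gamma>) *
      (\<integral>\<^sup>+ s \<in> {0<..<t/2}. ennreal (cutoff_ratio \<alpha> a s powr \<gamma> * qker \<alpha> s z y) \<partial>lborel)"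
proof -
  define A where "A s = cutoff_ratio \<alpha> a s powr \<gamma>" for s
  define B where "B s = cutoff_ratio \<alpha> b s powr \<gamma>" for s
  define Q where "Q s = qker \<alpha> s z y" for s
  define p where "p = \<gamma> / \<alpha>"
  define d where "d = real DIM('a)"
  define L where "L = dist z y powr (d + \<alpha>)"
  define m where "m = min (t/2) (a powr \<alpha>)"
  define k where "k = (2 * m) powr p / L"
  define K where "K = 2 powr (p + 1 + d + \<alpha>) / (2 - p)"
  define g where "g s = indicator {0<..<m} s * (k * s powr (1 - p))" for s
  have p: "0 < p" "p < 2"
    using assms by (auto simp: p_def field_simps)
  have K: "0 \<le> K"
    using p by (simp add: K_def)
  have zy: "z \<noteq> y" and L: "0 < L" and m: "0 < m"
    using assms by (auto simp: L_def m_def)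
  have A: "0 \<le> A s" "A s \<le> 1" and B: "0 \<le> B s" "B s \<le> 1" for s
    using assms by (auto simp: A_def B_def cutoff_ratio_powr_le_one)
  have Q: "0 \<le> Q s" if "0 < s" for s
    using that by (simp add: Q_def qker_nonneg)
  have upper: "(\<integral>\<^sup>+ s \<in> {0<..<t/2}. ennreal (g s) \<partial>lborel) = ennreal (K * (m\<^sup>2 / (2 * (2 * dist z y) powr (d + \<alpha>))))"
  proof -
    have "(\<integral>\<^sup>+ s \<in> {0<..<t/2}. ennreal (g s) \<partial>lborel) = ennreal (k * (m powr (2 - p) / (2 - p)))"
    proof -
      have "0 \<le> k" "{0<..<m} \<subseteq> {0<..<t/2}"
        using L by (auto simp: k_def m_def)
      then show ?thesis
        using set_nn_integral_indicator_powr[of "1 - p" m k "{0<..<t/2}"] p m by (simp add: g_def)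
    qed
    moreover have "(2 * dist z y) powr (d + \<alpha>) = 2 powr (d + \<alpha>) * L"
      by (simp add: L_def powr_mult)
    moreover have "2 powr (p + 1 + d + \<alpha>) = 2 powr p * 2 * 2 powr (d + \<alpha>)"
      by (simp add: powr_add)
    moreover have "m powr p * m powr (2 - p) = m\<^sup>2"
      using m by (simp add: powr_add[symmetric] powr_numeral)
    ultimately show ?thesis
      using L p by (simp add: k_def K_def powr_mult field_simps)
  qed
  have "ennreal (A t) * (\<integral>\<^sup>+ s \<in> {0<..<t/2}. ennreal (A s * B s * Q s) \<partial>lborel)
      \<le> ennreal ((1 + K) * B t) * (\<integral>\<^sup>+ s \<in> {0<..<t/2}. ennreal (A s * Q s) \<partial>lborel)"
  proof (rule set_nn_integral_le_absorb)
    have "ennreal (m\<^sup>2 / (2 * (2 * dist z y) powr (d + \<alpha>)))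
        \<le> (\<integral>\<^sup>+ s \<in> {0<..<t/2}. ennreal (A s * Q s) \<partial>lborel)"
      using cutoff_kernel_integral_ge[of \<alpha> a z y "t/2" \<gamma>] assms
      by (simp add: A_def Q_def m_def d_def)
    then show "(\<integral>\<^sup>+ s \<in> {0<..<t/2}. ennreal (g s) \<partial>lborel)
        \<le> ennreal K * (\<integral>\<^sup>+ s \<in> {0<..<t/2}. ennreal (A s * Q s) \<partial>lborel)"
      unfolding upper ennreal_mult'[OF K] by (rule mult_left_mono) simp
    show "(\<lambda>s. ennreal (A s * B s * Q s) * indicator {0<..<t/2} s) \<in> borel_measurable lborel"
      unfolding A_def B_def Q_def cutoff_ratio_def qker_def by measurable
    show "(\<lambda>s. ennreal (g s) * indicator {0<..<t/2} s) \<in> borel_measurable lborel"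
      unfolding g_def by measurable
    show "(\<lambda>s. ennreal (A s * Q s) * indicator {0<..<t/2} s) \<in> borel_measurable lborel"
      unfolding A_def Q_def cutoff_ratio_def qker_def by measurable
    show "0 \<le> A t" "0 \<le> B t"
      using A B by auto
    show "0 \<le> K"
      by (rule K)
    show "0 \<le> g s" "0 \<le> A s * Q s" if "s \<in> {0<..<t/2}" for s
      using that A Q m L p by (auto simp: g_def k_def)
    show "A t * (A s * B s * Q s) \<le> B t * (A s * Q s + g s)" if "s \<in> {0<..<t/2}" for s
      using cutoff_kernel_product_le[of \<alpha> \<gamma> a b z y s t] assms zy that
      by (simp add: A_def B_def Q_def g_def k_def L_def m_def p_def d_def)
  qed
  then show ?thesis
    by (simp add: A_def B_def Q_def p_def d_def K_def)
qed

lemma cutoff_kernel_integral_le_near: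
  fixes y z :: "'a::euclidean_space"
  assumes "0 \<le> \<gamma>" "0 \<le> a" "0 \<le> b" "a \<le> 2 * b" "S \<subseteq> {0..}"
  shows "ennreal (cutoff_ratio \<alpha> a t powr \<gamma>) *
      (\<integral>\<^sup>+ s \<in> S. ennreal (cutoff_ratio \<alpha> a s powr \<gamma> * cutoff_ratio \<alpha> b s powr \<gamma> * qker \<alpha> s z y) \<partial>lborel)
    \<le> ennreal (2 powr \<gamma> * cutoff_ratio \<alpha> b t powr \<gamma>) *
      (\<integral>\<^sup>+ s \<in> S. ennreal (cutoff_ratio \<alpha> a s powr \<gamma> * qker \<alpha> s z y) \<partial>lborel)"
proof (rule mult_mono)
  have "cutoff_ratio \<alpha> a t \<le> 2 * cutoff_ratio \<alpha> b t"
    using assms by (intro cutoff_ratio_le_mult) auto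
  then have "cutoff_ratio \<alpha> a t powr \<gamma> \<le> (2 * cutoff_ratio \<alpha> b t) powr \<gamma>"
    using assms by (intro powr_mono2) (auto simp: cutoff_ratio_nonneg)
  then show "ennreal (cutoff_ratio \<alpha> a t powr \<gamma>) \<le> ennreal (2 powr \<gamma> * cutoff_ratio \<alpha> b t powr \<gamma>)"
    by (intro ennreal_leI) (simp add: powr_mult)
  show "(\<integral>\<^sup>+ s \<in> S. ennreal (cutoff_ratio \<alpha> a s powr \<gamma> * cutoff_ratio \<alpha> b s powr \<gamma> * qker \<alpha> s z y) \<partial>lborel)
      \<le> (\<integral>\<^sup>+ s \<in> S. ennreal (cutoff_ratio \<alpha> a s powr \<gamma> * qker \<alpha> s z y) \<partial>lborel)"
  proof (intro nn_integral_mono)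
    fix s
    have "s \<in> S \<Longrightarrow> cutoff_ratio \<alpha> a s powr \<gamma> * cutoff_ratio \<alpha> b s powr \<gamma> * qker \<alpha> s z y
        \<le> cutoff_ratio \<alpha> a s powr \<gamma> * qker \<alpha> s z y"
      using assms qker_nonneg[of s \<alpha> z y]
      by (intro mult_right_mono mult_left_le) (auto simp: cutoff_ratio_powr_le_one)
    then show "ennreal (cutoff_ratio \<alpha> a s powr \<gamma> * cutoff_ratio \<alpha> b s powr \<gamma> * qker \<alpha> s z y) * indicator S s
        \<le> ennreal (cutoff_ratio \<alpha> a s powr \<gamma> * qker \<alpha> s z y) * indicator S s"
      by (auto intro: ennreal_leI split: split_indicator)
  qed
qed simp_all

lemma cutoff_kernel_integral_le:
  fixes y z :: "'a::euclidean_space"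
  assumes "0 < \<alpha>" "0 < \<gamma>" "\<gamma> < 2 * \<alpha>" "0 \<le> a" "0 \<le> b" "a \<le> b + dist z y" "0 < t"
  defines "C \<equiv> 2 powr \<gamma> + (1 + 2 powr (\<gamma> / \<alpha> + 1 + real DIM('a) + \<alpha>) / (2 - \<gamma> / \<alpha>))"
  shows "ennreal (cutoff_ratio \<alpha> a t powr \<gamma>) *
      (\<integral>\<^sup>+ s \<in> {0<..<t/2}. ennreal (cutoff_ratio \<alpha> a s powr \<gamma> * cutoff_ratio \<alpha> b s powr \<gamma> * qker \<alpha> s z y) \<partial>lborel)
    \<le> ennreal (C * cutoff_ratio \<alpha> b t powr \<gamma>) *
      (\<integral>\<^sup>+ s \<in> {0<..<t/2}. ennreal (cutoff_ratio \<alpha> a s powr \<gamma> * qker \<alpha> s z y) \<partial>lborel)"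
proof -
  define K where "K = 1 + 2 powr (\<gamma> / \<alpha> + 1 + real DIM('a) + \<alpha>) / (2 - \<gamma> / \<alpha>)"
  have "\<gamma> / \<alpha> < 2"
    using assms by (simp add: field_simps)
  then have "0 \<le> K"
    by (simp add: K_def)
  then have C: "2 powr \<gamma> \<le> C" "K \<le> C"
    by (auto simp: C_def K_def)
  have weaken: "ennreal (c * cutoff_ratio \<alpha> b t powr \<gamma>) * X \<le> ennreal (C * cutoff_ratio \<alpha> b t powr \<gamma>) * X"
    if "c \<le> C" for c X
    using that by (intro mult_right_mono ennreal_leI) auto
  show ?thesis
  proof (cases "a \<le> 2 * b")
    case True
    show ?thesis
      by (rule order_trans[OF cutoff_kernel_integral_le_near weaken[OF C(1)]]) (use assms(1-7) True in auto)
  next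
    case False
    show ?thesis
      by (rule order_trans[OF cutoff_kernel_integral_le_far weaken[OF C(2)[unfolded K_def]]])
        (use assms(1-7) False in auto)
  qed
qed

lemma rpow_bdry_ratio:
  "\<gamma> \<noteq> 0 \<Longrightarrow> - D \<noteq> {} \<Longrightarrow> rpow (bdry_ratio \<alpha> D s x) \<gamma> = cutoff_ratio \<alpha> (infdist x (- D)) s powr \<gamma>"
  by (simp add: rpow_def bdry_ratio_def cutoff_ratio_def)

theorem lemma2p2:
  fixes \<alpha> \<gamma> :: real
  assumes "0 < \<alpha>" "\<alpha> < 2" "0 \<le> \<gamma>" "\<gamma> < 2 * \<alpha>"
  shows "\<exists>C1 > 1. \<forall>(D :: 'a::euclidean_space set) \<in> sets borel. \<forall>t > 0. \<forall>y \<in> D. \<forall>z \<in> D.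
     ennreal (rpow (bdry_ratio \<alpha> D t z) \<gamma>) *
       (\<integral>\<^sup>+ s \<in> {0<..<t/2}. ennreal (psi \<alpha> \<gamma> D s z y * qker \<alpha> s z y) \<partial>lborel)
     \<le> ennreal (C1 * rpow (bdry_ratio \<alpha> D t y) \<gamma>) *
       (\<integral>\<^sup>+ s \<in> {0<..<t/2}. ennreal (rpow (bdry_ratio \<alpha> D s z) \<gamma> * qker \<alpha> s z y) \<partial>lborel)"
proof (intro exI conjI ballI allI impI)
  define C1 where "C1 = 2 powr \<gamma> + (1 + 2 powr (\<gamma> / \<alpha> + 1 + real DIM('a) + \<alpha>) / (2 - \<gamma> / \<alpha>))"
  have "0 < 2 powr (\<gamma> / \<alpha> + 1 + real DIM('a) + \<alpha>) / (2 - \<gamma> / \<alpha>)"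
    using assms by (simp add: field_simps)
  then show "1 < C1"
    by (simp add: C1_def add_pos_pos)
  fix D :: "'a set" and t :: real and y z :: 'a
  assume "0 < t" "y \<in> D" "z \<in> D"
  show "ennreal (rpow (bdry_ratio \<alpha> D t z) \<gamma>) *
       (\<integral>\<^sup>+ s \<in> {0<..<t/2}. ennreal (psi \<alpha> \<gamma> D s z y * qker \<alpha> s z y) \<partial>lborel)
     \<le> ennreal (C1 * rpow (bdry_ratio \<alpha> D t y) \<gamma>) *
       (\<integral>\<^sup>+ s \<in> {0<..<t/2}. ennreal (rpow (bdry_ratio \<alpha> D s z) \<gamma> * qker \<alpha> s z y) \<partial>lborel)"
  proof (cases "\<gamma> = 0 \<or> - D = {}")
    case True
    then have "\<And>s x. rpow (bdry_ratio \<alpha> D s x) \<gamma> = 1"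
      by (auto simp: rpow_def bdry_ratio_def)
    moreover have "1 \<le> ennreal C1"
      using \<open>1 < C1\<close> by simp
    ultimately show ?thesis
      using mult_right_mono[OF \<open>1 \<le> ennreal C1\<close>, of "\<integral>\<^sup>+ s \<in> {0<..<t/2}. ennreal (qker \<alpha> s z y) \<partial>lborel"]
      by (simp add: psi_def)
  next
    case False
    then have "rpow (bdry_ratio \<alpha> D s x) \<gamma> = cutoff_ratio \<alpha> (infdist x (- D)) s powr \<gamma>" for s x
      by (simp add: rpow_bdry_ratio)
    then show ?thesis
      unfolding psi_def C1_def
      using cutoff_kernel_integral_le[of \<alpha> \<gamma> "infdist z (- D)" "infdist y (- D)" z y t] assms False \<open>0 < t\<close>
      by (simp add: infdist_nonneg infdist_triangle)
  qed
qed

end
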